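(* Let $X_1,X_2,\dots$ be i.i.d. with an arbitrary distribution function $F$, and let $Y_k=\max\{X_1,\dots,X_k\}$, $k\ge1$. Fix integers $1\le i<j$, and write $I(\cdot)$ for the indicator function. (i) The conditional distribution function of $Y_{j+1}$ given $Y_j$ is $\Pr[Y_{j+1}\le y\mid Y_j]=F(y)I(y\ge Y_j)$, $y\in\mathbb{R}$; if moreover $i+1<j$, then $\Pr[Y_{j+1}\le y\mid Y_{i+1},Y_j]=\Pr[Y_{j+1}\le y\mid Y_j]$, $y\in\mathbb{R}$. (ii) The conditional distribution function of $Y_i$ given $Y_{i+1}$ is \[ \Pr[Y_i\le x\mid Y_{i+1}]=I(x\ge Y_{i+1})+I(x<Y_{i+1})\frac{F^i(x)}{\sum_{l=0}^{i}F^l(Y_{i+1})F^{i-l}(Y_{i+1}-)},\qquad x\in\mathbb{R}; \] if moreover $i+1<j$, then $\Pr[Y_i\le x\mid Y_{i+1},Y_j]=\Pr[Y_i\le x\mid Y_{i+1}]$, $x\in\mathbb{R}$. (iii) Given $(Y_{i+1},Y_j)$, the random variables $Y_i$ and $Y_{j+1}$ are conditionally independent.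
   Context: $F(y-)$ denotes the left limit $\lim_{t\uparrow y}F(t)$. *)

theory Defs
  imports "HOL-Probability.Probability"
begin

definition run_max :: "(nat \<Rightarrow> 'a \<Rightarrow> real) \<Rightarrow> nat \<Rightarrow> 'a \<Rightarrow> real" where
  "run_max X k \<omega> = Max ((\<lambda>l. X l \<omega>) ` {1..k})"

definition left_lim :: "(real \<Rightarrow> real) \<Rightarrow> real \<Rightarrow> real" where
  "left_lim F y = Lim (at_left y) F"

definition cond_prob :: "'a measure \<Rightarrow> 'a measure \<Rightarrow> 'a set \<Rightarrow> 'a \<Rightarrow> real" where
  "cond_prob M G A = real_cond_exp M G (indicator A)"

definition sigma_gen :: "'a measure \<Rightarrow> ('a \<Rightarrow> 'b::topological_space) \<Rightarrow> 'a measure" where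
  "sigma_gen M f = vimage_algebra (space M) f borel"

definition cond_indep :: "'a measure \<Rightarrow> 'a measure \<Rightarrow> ('a \<Rightarrow> real) \<Rightarrow> ('a \<Rightarrow> real) \<Rightarrow> bool" where
  "cond_indep M G U V \<longleftrightarrow>
     (\<forall>A\<in>sets borel. \<forall>B\<in>sets borel.
        AE \<omega> in M. cond_prob M G (U -` A \<inter> V -` B \<inter> space M) \<omega>
                    = cond_prob M G (U -` A \<inter> space M) \<omega> * cond_prob M G (V -` B \<inter> space M) \<omega>)"

end

theory Submission
  imports Defs
begin

text \<open>Write Y_(k+1) = max Y_k X_(k+1), where X_(k+1) is independent of X_1, ..., X_k.
  Hence, given the whole past X_1, ..., X_j, the law of Y_(j+1) is the kernel
  t \<mapsto> P(max t X_1 \<in> B) evaluated at Y_j: this gives (i), and since Y_i, Y_(i+1) and Y_j are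
  functions of that past it also gives the conditional independence (iii).
  For (ii), induction on the same recursion shows that Y_(i+1) has density
  \<Sum>l\<le>i. F^l F(-)^(i-l) with respect to the law of X_1; splitting according to whether
  X_(i+1) exceeds x yields the conditional law of Y_i given Y_(i+1). Finally
  Y_j = max Y_(i+1) Z with Z the maximum of X_(i+2), ..., X_j, which is independent of
  X_1, ..., X_(i+1), so additionally conditioning on Y_j does not change the conditional law of Y_i.\<close>

section \<open>Conditioning on generated \<sigma>-algebras\<close>

lemma (in prob_space) nn_integral_indep_var:
  assumes ind: "indep_var S Z T W" and f[measurable]: "f \<in> borel_measurable (S \<Otimes>\<^sub>M T)"
  shows "(\<integral>\<^sup>+\<omega>. f (Z \<omega>, W \<omega>) \<partial>M) = (\<integral>\<^sup>+z. \<integral>\<^sup>+w. f (z, w) \<partial>distr M T W \<partial>distr M S Z)"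
    and "(\<integral>\<^sup>+\<omega>. f (Z \<omega>, W \<omega>) \<partial>M) = (\<integral>\<^sup>+w. \<integral>\<^sup>+z. f (z, w) \<partial>distr M S Z \<partial>distr M T W)"
proof -
  have [measurable]: "Z \<in> measurable M S" "W \<in> measurable M T"
    and joint: "distr M S Z \<Otimes>\<^sub>M distr M T W = distr M (S \<Otimes>\<^sub>M T) (\<lambda>x. (Z x, W x))"
    using ind by (auto simp: indep_var_distribution_eq)
  interpret Z: prob_space "distr M S Z" by (rule prob_space_distr) simp
  interpret W: prob_space "distr M T W" by (rule prob_space_distr) simp
  interpret P: pair_sigma_finite "distr M S Z" "distr M T W" ..
  have "(\<integral>\<^sup>+\<omega>. f (Z \<omega>, W \<omega>) \<partial>M) = integral\<^sup>N (distr M S Z \<Otimes>\<^sub>M distr M T W) f"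
    unfolding joint by (simp add: nn_integral_distr)
  then show "(\<integral>\<^sup>+\<omega>. f (Z \<omega>, W \<omega>) \<partial>M) = (\<integral>\<^sup>+z. \<integral>\<^sup>+w. f (z, w) \<partial>distr M T W \<partial>distr M S Z)"
    and "(\<integral>\<^sup>+\<omega>. f (Z \<omega>, W \<omega>) \<partial>M) = (\<integral>\<^sup>+w. \<integral>\<^sup>+z. f (z, w) \<partial>distr M S Z \<partial>distr M T W)"
    using W.nn_integral_fst[of f] P.nn_integral_snd[of f] by simp_all
qed

lemma (in prob_space) sigma_finite_subalgebra_sigma_gen:
  assumes "f \<in> borel_measurable M"
  shows "sigma_finite_subalgebra M (sigma_gen M f)"
proof -
  have "subalgebra M (sigma_gen M f)"
    unfolding subalgebra_def sigma_gen_def using assms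
    by (auto simp: sets_vimage_algebra2 measurable_def)
  then interpret finite_measure_subalgebra M "sigma_gen M f"
    by unfold_locales
  show ?thesis by (rule sigma_finite_subalgebra_axioms)
qed

lemma sets_sigma_gen_subset:
  assumes "f \<in> borel_measurable H" "space H = space M"
  shows "sets (sigma_gen M f) \<subseteq> sets H"
proof -
  have "f \<in> space M \<rightarrow> UNIV" by simp
  then show ?thesis using assms
    by (auto simp: sigma_gen_def sets_vimage_algebra2 dest: measurable_sets)
qed

lemma measurable_sigma_gen_self:
  "f \<in> borel_measurable M \<Longrightarrow> f \<in> borel_measurable (sigma_gen M f)"
  unfolding sigma_gen_def by (rule measurable_vimage_algebra1) simp

lemma measurable_sigma_gen_pair:
  fixes f g :: "'a \<Rightarrow> real"
  assumes "f \<in> borel_measurable M" "g \<in> borel_measurable M"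
  shows "f \<in> borel_measurable (sigma_gen M (\<lambda>\<omega>. (f \<omega>, g \<omega>)))"
    and "g \<in> borel_measurable (sigma_gen M (\<lambda>\<omega>. (f \<omega>, g \<omega>)))"
proof -
  have pair: "(\<lambda>\<omega>. (f \<omega>, g \<omega>)) \<in> borel_measurable (sigma_gen M (\<lambda>\<omega>. (f \<omega>, g \<omega>)))"
    using assms by (intro measurable_sigma_gen_self) measurable
  have "fst \<in> borel_measurable (borel :: (real \<times> real) measure)"
    and "snd \<in> borel_measurable (borel :: (real \<times> real) measure)"
    by (auto intro!: borel_measurable_continuous_onI continuous_intros)
  from this[THEN measurable_compose[OF pair]]
  show "f \<in> borel_measurable (sigma_gen M (\<lambda>\<omega>. (f \<omega>, g \<omega>)))"
    and "g \<in> borel_measurable (sigma_gen M (\<lambda>\<omega>. (f \<omega>, g \<omega>)))"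
    by (simp_all add: comp_def)
qed

lemma integral_indicator_mult_eqI:
  assumes [measurable]: "E \<in> sets M" "S \<in> sets M" "g \<in> borel_measurable M"
    and g_nonneg: "\<And>\<omega>. 0 \<le> g \<omega>"
    and eq: "(\<integral>\<^sup>+\<omega>. indicator E \<omega> * indicator S \<omega> \<partial>M) = (\<integral>\<^sup>+\<omega>. indicator E \<omega> * ennreal (g \<omega>) \<partial>M)"
  shows "(\<integral>\<omega>. indicator E \<omega> * indicator S \<omega> \<partial>M) = (\<integral>\<omega>. indicator E \<omega> * g \<omega> \<partial>M)"
proof -
  have "(\<integral>\<omega>. indicator E \<omega> * indicator S \<omega> \<partial>M) = enn2real (\<integral>\<^sup>+\<omega>. indicator E \<omega> * indicator S \<omega> \<partial>M)"
    by (subst integral_eq_nn_integral) (auto intro!: arg_cong[where f=enn2real] nn_integral_cong simp: indicator_def)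
  also have "\<dots> = (\<integral>\<omega>. indicator E \<omega> * g \<omega> \<partial>M)"
    unfolding eq
    by (subst integral_eq_nn_integral) (auto intro!: arg_cong[where f=enn2real] nn_integral_cong simp: indicator_def g_nonneg)
  finally show ?thesis .
qed

lemma (in prob_space) cond_prob_eqI:
  assumes "sigma_finite_subalgebra M G" and [measurable]: "S \<in> sets M"
    and g[measurable]: "g \<in> borel_measurable G" and g_nonneg: "\<And>\<omega>. 0 \<le> g \<omega>"
    and eq: "\<And>A. A \<in> sets G \<Longrightarrow>
      (\<integral>\<^sup>+\<omega>. indicator A \<omega> * indicator S \<omega> \<partial>M) = (\<integral>\<^sup>+\<omega>. indicator A \<omega> * ennreal (g \<omega>) \<partial>M)"
  shows "AE \<omega> in M. cond_prob M G S \<omega> = g \<omega>"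
proof -
  interpret sigma_finite_subalgebra M G by fact
  have [measurable]: "g \<in> borel_measurable M" by (rule measurable_from_subalg[OF subalg g])
  have sets_G: "A \<in> sets G \<Longrightarrow> A \<in> sets M" for A using subalg by (auto simp: subalgebra_def)
  have "(\<integral>\<^sup>+\<omega>. ennreal (g \<omega>) \<partial>M) = (\<integral>\<^sup>+\<omega>. indicator (space M) \<omega> * ennreal (g \<omega>) \<partial>M)"
    by (intro nn_integral_cong) simp
  also have "\<dots> = (\<integral>\<^sup>+\<omega>. indicator (space M) \<omega> * indicator S \<omega> \<partial>M)"
    using eq[of "space M"] subalg by (metis sets.top subalgebra_def)
  also have "\<dots> \<le> (\<integral>\<^sup>+\<omega>. 1 \<partial>M)"
    by (intro nn_integral_mono) (auto simp: indicator_def)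
  also have "\<dots> < \<infinity>" by (simp add: emeasure_space_1)
  finally have "integrable M g"
    by (intro integrableI_nonneg) (auto simp: g_nonneg)
  moreover have "integrable M (indicator S :: 'a \<Rightarrow> real)"
    by (rule integrable_real_indicator) (auto simp: emeasure_eq_measure)
  ultimately have "AE \<omega> in M. real_cond_exp M G (indicator S) \<omega> = g \<omega>"
  proof (intro real_cond_exp_charact[OF _ _ _ g])
    fix A assume A: "A \<in> sets G"
    then have [measurable]: "A \<in> sets M" by (rule sets_G)
    show "(\<integral>x \<in> A. (indicator S x :: real) \<partial>M) = (\<integral>x \<in> A. g x \<partial>M)"
      unfolding set_lebesgue_integral_def
      using integral_indicator_mult_eqI[OF _ _ _ g_nonneg eq[OF A]] by simp
  qed
  then show ?thesis unfolding cond_prob_def .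
qed

lemma (in prob_space) cond_prob_Int_eq_mult:
  assumes "sigma_finite_subalgebra M G" and sets_GH: "sets G \<subseteq> sets H" and sets_HM: "sets H \<subseteq> sets M"
    and A: "A \<in> sets H" and [measurable]: "B \<in> sets M"
    and g[measurable]: "g \<in> borel_measurable G" and g_nonneg: "\<And>\<omega>. 0 \<le> g \<omega>" and g_le_1: "\<And>\<omega>. g \<omega> \<le> 1"
    and eq: "\<And>E. E \<in> sets H \<Longrightarrow>
      (\<integral>\<^sup>+\<omega>. indicator E \<omega> * indicator B \<omega> \<partial>M) = (\<integral>\<^sup>+\<omega>. indicator E \<omega> * ennreal (g \<omega>) \<partial>M)"
  shows "AE \<omega> in M. cond_prob M G (A \<inter> B) \<omega> = cond_prob M G A \<omega> * g \<omega>"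
proof -
  interpret sigma_finite_subalgebra M G by fact
  have [measurable]: "g \<in> borel_measurable M" by (rule measurable_from_subalg[OF subalg g])
  have [measurable]: "A \<in> sets M" using A sets_HM by auto
  have sets_G: "C \<in> sets G \<Longrightarrow> C \<in> sets M" for C using subalg by (auto simp: subalgebra_def)
  define \<psi> where "\<psi> = real_cond_exp M G (indicator A)"
  have [measurable]: "\<psi> \<in> borel_measurable G" unfolding \<psi>_def by (rule borel_measurable_cond_exp)
  have integrable_A: "integrable M (\<lambda>\<omega>. f \<omega> * indicator A \<omega>)"
    if [measurable]: "f \<in> borel_measurable M" and "\<And>\<omega>. \<bar>f \<omega>\<bar> \<le> 1" for f :: "'a \<Rightarrow> real"
    by (rule integrable_const_bound[where B=1]) (auto simp: that indicator_def abs_mult)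
  have g_abs: "\<bar>g \<omega>\<bar> \<le> 1" for \<omega> using g_nonneg[of \<omega>] g_le_1[of \<omega>] by simp
  have "AE \<omega> in M. real_cond_exp M G (indicator (A \<inter> B)) \<omega> = g \<omega> * \<psi> \<omega>"
  proof (rule real_cond_exp_charact)
    show "integrable M (indicator (A \<inter> B) :: 'a \<Rightarrow> real)"
      by (rule integrable_real_indicator) (auto simp: emeasure_eq_measure)
    show "integrable M (\<lambda>\<omega>. g \<omega> * \<psi> \<omega>)"
      unfolding \<psi>_def by (rule real_cond_exp_intg(1)) (auto intro!: integrable_A g_abs)
    show "(\<lambda>\<omega>. g \<omega> * \<psi> \<omega>) \<in> borel_measurable G" by measurable
    fix C assume C: "C \<in> sets G"
    then have [measurable]: "C \<in> sets M" by (rule sets_G)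
    have CA: "C \<inter> A \<in> sets H" using C A sets_GH by auto
    have "(\<integral>\<omega> \<in> C. (indicator (A \<inter> B) \<omega> :: real) \<partial>M) = (\<integral>\<omega>. indicator (C \<inter> A) \<omega> * indicator B \<omega> \<partial>M)"
      unfolding set_lebesgue_integral_def by (intro Bochner_Integration.integral_cong) (auto simp: indicator_def)
    also have "\<dots> = (\<integral>\<omega>. (indicator C \<omega> * g \<omega>) * indicator A \<omega> \<partial>M)"
      using integral_indicator_mult_eqI[OF _ _ _ g_nonneg eq[OF CA]] CA sets_HM
      by (auto simp: indicator_inter_arith mult_ac)
    also have "\<dots> = (\<integral>\<omega>. (indicator C \<omega> * g \<omega>) * \<psi> \<omega> \<partial>M)"
      unfolding \<psi>_def
    proof (rule real_cond_exp_intg(2)[symmetric])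
      show "integrable M (\<lambda>\<omega>. (indicator C \<omega> * g \<omega>) * indicator A \<omega>)"
        by (rule integrable_A) (auto simp: indicator_def g_abs)
    qed (use C in measurable)
    also have "\<dots> = (\<integral>\<omega> \<in> C. g \<omega> * \<psi> \<omega> \<partial>M)"
      unfolding set_lebesgue_integral_def by (intro Bochner_Integration.integral_cong) (auto simp: indicator_def)
    finally show "(\<integral>\<omega> \<in> C. (indicator (A \<inter> B) \<omega> :: real) \<partial>M) = (\<integral>\<omega> \<in> C. g \<omega> * \<psi> \<omega> \<partial>M)" .
  qed
  then show ?thesis
    unfolding cond_prob_def \<psi>_def by eventually_elim (simp add: mult.commute)
qed

section \<open>Running maxima of an i.i.d. sequence\<close>

lemma (in finite_borel_measure) left_lim_cdf: "left_lim (cdf M) a = measure M {..<a}"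
  unfolding left_lim_def by (rule tendsto_Lim[OF _ cdf_at_left]) simp

definition max_on :: "nat set \<Rightarrow> (nat \<Rightarrow> real) \<Rightarrow> real" where
  "max_on K v = Max (v ` K)"

lemma measurable_max_on[measurable]:
  "finite K \<Longrightarrow> K' \<subseteq> K \<Longrightarrow> max_on K' \<in> borel_measurable (PiM K (\<lambda>_. borel))"
  unfolding max_on_def using finite_subset[of K' K]
  by (intro borel_measurable_Max) (auto intro!: measurable_component_singleton)

locale iid_running_max = prob_space M for M :: "'a measure" +
  fixes X :: "nat \<Rightarrow> 'a \<Rightarrow> real"
  assumes indep: "indep_vars (\<lambda>_. borel) X {1..}"
    and ident: "\<And>k. k \<ge> 1 \<Longrightarrow> distr M borel (X k) = distr M borel (X 1)"
begin

abbreviation Y :: "nat \<Rightarrow> 'a \<Rightarrow> real" where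
  "Y \<equiv> run_max X"

definition law :: "real measure" where
  "law = distr M borel (X 1)"

definition block :: "nat set \<Rightarrow> 'a \<Rightarrow> nat \<Rightarrow> real" where
  "block K \<omega> = restrict (\<lambda>l. X l \<omega>) K"

lemma measurable_X[measurable]: "1 \<le> k \<Longrightarrow> X k \<in> borel_measurable M"
  using indep by (auto simp: indep_vars_def)

sublocale law: real_distribution law
  unfolding law_def by (rule real_distribution_distr) simp

lemma distr_X_eq_law: "1 \<le> k \<Longrightarrow> distr M borel (X k) = law"
  unfolding law_def by (rule ident)

lemma measure_X_le: "1 \<le> k \<Longrightarrow> prob {\<omega> \<in> space M. X k \<omega> \<le> x} = cdf law x"
  unfolding cdf_def distr_X_eq_law[symmetric] by (subst measure_distr) (auto intro!: arg_cong[where f=prob])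

lemma measurable_block[measurable]: "K \<subseteq> {1..} \<Longrightarrow> block K \<in> measurable M (PiM K (\<lambda>_. borel))"
  unfolding block_def by (intro measurable_restrict) auto

lemma indep_var_block:
  "A \<inter> B = {} \<Longrightarrow> A \<subseteq> {1..} \<Longrightarrow> B \<subseteq> {1..} \<Longrightarrow>
    indep_var (PiM A (\<lambda>_. borel)) (block A) (PiM B (\<lambda>_. borel)) (block B)"
  unfolding block_def[abs_def] by (rule indep_var_restrict[OF indep])

lemma run_max_eq_max_on: "k \<le> j \<Longrightarrow> Y k \<omega> = max_on {1..k} (block {1..j} \<omega>)"
  unfolding run_max_def max_on_def block_def by (intro arg_cong[where f=Max]) auto

lemma measurable_run_max[measurable]: "Y k \<in> borel_measurable M"
  unfolding run_max_def by (intro borel_measurable_Max) auto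

lemma run_max_split:
  assumes "1 \<le> k" "k < j"
  shows "Y j \<omega> = max (Y k \<omega>) (max_on {k+1..j} (block {k+1..j} \<omega>))"
proof -
  have "{1..j} = {1..k} \<union> {k+1..j}" "{1..k} \<noteq> {}" "{k+1..j} \<noteq> {}" using assms by auto
  then show ?thesis unfolding run_max_def max_on_def block_def
    by (simp add: Max_Un image_Un)
qed

lemma run_max_Suc: "1 \<le> k \<Longrightarrow> Y (Suc k) \<omega> = max (Y k \<omega>) (X (Suc k) \<omega>)"
  using run_max_split[of k "Suc k" \<omega>] by (simp add: max_on_def block_def)

lemma indep_run_max_X: "1 \<le> k \<Longrightarrow> indep_var borel (Y k) borel (X (Suc k))"
proof -
  assume "1 \<le> k"
  have "indep_var borel (max_on {1..k} \<circ> block {1..k}) borel ((\<lambda>v. v (Suc k)) \<circ> block {Suc k})"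
    by (rule indep_var_compose[OF indep_var_block]) (auto intro!: measurable_component_singleton)
  moreover have "max_on {1..k} \<circ> block {1..k} = Y k" "(\<lambda>v. v (Suc k)) \<circ> block {Suc k} = X (Suc k)"
    using run_max_eq_max_on[of k k] by (auto simp: block_def)
  ultimately show ?thesis by simp
qed

lemma prob_run_max_le: "1 \<le> k \<Longrightarrow> prob {\<omega> \<in> space M. Y k \<omega> \<le> x} = cdf law x ^ k"
proof (induction k rule: dec_induct)
  case base
  show ?case using measure_X_le[of 1 x] by (simp add: run_max_def)
next
  case (step k)
  have "{\<omega> \<in> space M. Y (Suc k) \<omega> \<le> x} = (\<lambda>\<omega>. (Y k \<omega>, X (Suc k) \<omega>)) -` ({..x} \<times> {..x}) \<inter> space M"
    using step(1) by (auto simp: run_max_Suc)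
  then have "prob {\<omega> \<in> space M. Y (Suc k) \<omega> \<le> x}
      = prob {\<omega> \<in> space M. Y k \<omega> \<le> x} * prob {\<omega> \<in> space M. X (Suc k) \<omega> \<le> x}"
    using indep_varD[OF indep_run_max_X[OF step(1)], of "{..x}" "{..x}"]
    by (simp add: vimage_def Int_def conj_commute)
  then show ?case using step(3) measure_X_le[of "Suc k" x] by simp
qed

lemma emeasure_distr_run_max_atMost:
  "1 \<le> k \<Longrightarrow> emeasure (distr M borel (Y k)) {..x} = ennreal (cdf law x ^ k)"
  using prob_run_max_le[of k x]
  by (simp add: emeasure_distr emeasure_eq_measure vimage_def Int_def conj_commute)

text \<open>The density of Y_(n+1) with respect to the law of X_1 is
  (F^(n+1)(t) - F^(n+1)(t-)) / (F(t) - F(t-)) where F jumps, and (n+1) F^n(t) elsewhere.\<close>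
definition max_density :: "nat \<Rightarrow> real \<Rightarrow> real" where
  "max_density n t = (\<Sum>l=0..n. cdf law t ^ l * measure law {..<t} ^ (n - l))"

lemma measurable_cdf_law[measurable]: "cdf law \<in> borel_measurable borel"
  by (rule borel_measurable_mono) (auto simp: mono_def law.cdf_nondecreasing)

lemma measurable_measure_law_lessThan[measurable]: "(\<lambda>t. measure law {..<t}) \<in> borel_measurable borel"
  by (rule borel_measurable_mono) (auto simp: mono_def intro!: law.finite_measure_mono)

lemma measurable_max_density[measurable]: "max_density n \<in> borel_measurable borel"
  unfolding max_density_def[abs_def] by measurable

lemma max_density_nonneg: "0 \<le> max_density n t"
  unfolding max_density_def by (intro sum_nonneg) (auto simp: law.cdf_nonneg)

lemma max_density_Suc: "max_density (Suc n) t = cdf law t ^ Suc n + measure law {..<t} * max_density n t"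
  unfolding max_density_def by (simp add: sum_distrib_left Suc_diff_le mult.left_commute)

lemma cdf_power_le_max_density: "cdf law t ^ n \<le> max_density n t"
proof -
  have "cdf law t ^ n * measure law {..<t} ^ (n - n) \<le> max_density n t"
    unfolding max_density_def by (rule member_le_sum) (auto simp: law.cdf_nonneg)
  then show ?thesis by simp
qed

lemma max_density_mult_cdf_quotient:
  assumes "x \<le> t"
  shows "ennreal (max_density n t) * ennreal (cdf law x ^ n / max_density n t) = ennreal (cdf law x ^ n)"
proof (cases "max_density n t = 0")
  case True
  have "cdf law x ^ n \<le> cdf law t ^ n"
    using assms by (intro power_mono law.cdf_nondecreasing law.cdf_nonneg)
  then have zero: "cdf law x ^ n = 0"
    using cdf_power_le_max_density[of t n] True zero_le_power[OF law.cdf_nonneg, of x n] by linarith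
  show ?thesis unfolding zero by simp
next
  case False
  then show ?thesis
    by (simp add: law.cdf_nonneg max_density_nonneg flip: ennreal_mult)
qed

text \<open>Y_(k+1) \<in> B happens either with X_(k+1) \<in> B and Y_k \<le> X_(k+1), or with
  Y_k \<in> B and X_(k+1) < Y_k.\<close>
lemma emeasure_distr_run_max_Suc:
  assumes k: "1 \<le> k" and [measurable]: "B \<in> sets borel"
  shows "emeasure (distr M borel (Y (Suc k))) B
    = (\<integral>\<^sup>+w. ennreal (cdf law w ^ k) * indicator B w \<partial>law)
      + (\<integral>\<^sup>+z. indicator B z * ennreal (measure law {..<z}) \<partial>distr M borel (Y k))"
proof -
  let ?Z = "Y k" and ?W = "X (Suc k)"
  have indep_ZW: "indep_var borel ?Z borel ?W" by (rule indep_run_max_X[OF k])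
  have law_W: "distr M borel ?W = law" by (rule distr_X_eq_law) simp
  define f1 where "f1 = (\<lambda>p::real \<times> real. indicator B (snd p) * indicator {(z, w). z \<le> w} p :: ennreal)"
  define f2 where "f2 = (\<lambda>p::real \<times> real. indicator B (fst p) * indicator {(z, w). w < z} p :: ennreal)"
  have [measurable]: "f1 \<in> borel_measurable (borel \<Otimes>\<^sub>M borel)" "f2 \<in> borel_measurable (borel \<Otimes>\<^sub>M borel)"
    unfolding f1_def f2_def by measurable
  have "emeasure (distr M borel (Y (Suc k))) B = (\<integral>\<^sup>+\<omega>. indicator B (Y (Suc k) \<omega>) \<partial>M)"
    using nn_integral_distr[of "Y (Suc k)" M borel "indicator B"] by simp
  also have "\<dots> = (\<integral>\<^sup>+\<omega>. f1 (?Z \<omega>, ?W \<omega>) \<partial>M) + (\<integral>\<^sup>+\<omega>. f2 (?Z \<omega>, ?W \<omega>) \<partial>M)"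
    by (subst nn_integral_add[symmetric])
      (auto intro!: nn_integral_cong simp: run_max_Suc[OF k] f1_def f2_def indicator_def max_def)
  also have "(\<integral>\<^sup>+\<omega>. f1 (?Z \<omega>, ?W \<omega>) \<partial>M) = (\<integral>\<^sup>+w. \<integral>\<^sup>+z. f1 (z, w) \<partial>distr M borel ?Z \<partial>law)"
    using nn_integral_indep_var(2)[OF indep_ZW, of f1] law_W by simp
  also have "\<dots> = (\<integral>\<^sup>+w. ennreal (cdf law w ^ k) * indicator B w \<partial>law)"
  proof (intro nn_integral_cong)
    fix w
    have "(\<integral>\<^sup>+z. f1 (z, w) \<partial>distr M borel ?Z) = (\<integral>\<^sup>+z. indicator B w * indicator {..w} z \<partial>distr M borel ?Z)"
      by (intro nn_integral_cong) (auto simp: f1_def indicator_def)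
    then show "(\<integral>\<^sup>+z. f1 (z, w) \<partial>distr M borel ?Z) = ennreal (cdf law w ^ k) * indicator B w"
      using k by (simp add: nn_integral_cmult emeasure_distr_run_max_atMost mult.commute)
  qed
  also have "(\<integral>\<^sup>+\<omega>. f2 (?Z \<omega>, ?W \<omega>) \<partial>M) = (\<integral>\<^sup>+z. \<integral>\<^sup>+w. f2 (z, w) \<partial>law \<partial>distr M borel ?Z)"
    using nn_integral_indep_var(1)[OF indep_ZW, of f2] law_W by simp
  also have "\<dots> = (\<integral>\<^sup>+z. indicator B z * ennreal (measure law {..<z}) \<partial>distr M borel ?Z)"
  proof (intro nn_integral_cong)
    fix z
    have "(\<integral>\<^sup>+w. f2 (z, w) \<partial>law) = (\<integral>\<^sup>+w. indicator B z * indicator {..<z} w \<partial>law)"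
      by (intro nn_integral_cong) (auto simp: f2_def indicator_def)
    then show "(\<integral>\<^sup>+w. f2 (z, w) \<partial>law) = indicator B z * ennreal (measure law {..<z})"
      by (simp add: nn_integral_cmult law.emeasure_eq_measure)
  qed
  finally show ?thesis .
qed

lemma distr_run_max_Suc: "distr M borel (Y (Suc n)) = density law (max_density n)"
proof (induction n)
  case 0
  have "Y (Suc 0) = X 1" by (auto simp: run_max_def)
  then show ?case by (simp add: max_density_def law_def density_1)
next
  case (Suc n)
  show ?case
  proof (rule measure_eqI)
    fix B assume "B \<in> sets (distr M borel (Y (Suc (Suc n))))"
    then have B[measurable]: "B \<in> sets borel" by simp
    have "emeasure (distr M borel (Y (Suc (Suc n)))) B
      = (\<integral>\<^sup>+w. ennreal (cdf law w ^ Suc n) * indicator B w \<partial>law)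
        + (\<integral>\<^sup>+z. ennreal (max_density n z) * (indicator B z * ennreal (measure law {..<z})) \<partial>law)"
      using emeasure_distr_run_max_Suc[of "Suc n" B] by (simp add: Suc.IH nn_integral_density)
    also have "\<dots> = (\<integral>\<^sup>+w. ennreal (max_density (Suc n) w) * indicator B w \<partial>law)"
      by (subst nn_integral_add[symmetric])
        (auto intro!: nn_integral_cong simp: max_density_Suc indicator_def ennreal_mult'[symmetric]
          ennreal_plus[symmetric] max_density_nonneg law.cdf_nonneg mult.commute simp del: ennreal_plus)
    finally show "emeasure (distr M borel (Y (Suc (Suc n)))) B = emeasure (density law (max_density (Suc n))) B"
      by (simp add: emeasure_density)
  qed simp
qed

definition cond_cdf_prev :: "nat \<Rightarrow> real \<Rightarrow> real \<Rightarrow> real" where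
  "cond_cdf_prev n x s = (if s \<le> x then 1 else cdf law x ^ n / max_density n s)"

lemma measurable_cond_cdf_prev[measurable]: "cond_cdf_prev n x \<in> borel_measurable borel"
  unfolding cond_cdf_prev_def[abs_def] by measurable

lemma cond_cdf_prev_nonneg: "0 \<le> cond_cdf_prev n x s"
  unfolding cond_cdf_prev_def using max_density_nonneg[of n s] by (auto simp: law.cdf_nonneg)

text \<open>On Y_(i+1) > x, the event Y_i \<le> x means that the maximum is attained by X_(i+1)
  alone, which contributes F(x)^i times the law of X_(i+1).\<close>
lemma nn_integral_run_max_le_cond_cdf_prev:
  assumes i: "1 \<le> i" and B[measurable]: "B \<in> sets borel"
  shows "(\<integral>\<^sup>+\<omega>. indicator B (Y (Suc i) \<omega>) * indicator {..x} (Y i \<omega>) \<partial>M)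
       = (\<integral>\<^sup>+\<omega>. indicator B (Y (Suc i) \<omega>) * ennreal (cond_cdf_prev i x (Y (Suc i) \<omega>)) \<partial>M)"
proof -
  let ?Z = "Y i" and ?W = "X (Suc i)" and ?Y = "Y (Suc i)"
  define B1 where "B1 = B \<inter> {..x}"
  define B2 where "B2 = B \<inter> {x<..}"
  have [measurable]: "B1 \<in> sets borel" "B2 \<in> sets borel" unfolding B1_def B2_def by auto
  have indep_ZW: "indep_var borel ?Z borel ?W" by (rule indep_run_max_X[OF i])
  have law_W: "distr M borel ?W = law" by (rule distr_X_eq_law) simp
  have "(\<integral>\<^sup>+\<omega>. indicator B (?Y \<omega>) * indicator {..x} (?Z \<omega>) \<partial>M)
      = (\<integral>\<^sup>+\<omega>. indicator B1 (?Y \<omega>) + indicator {..x} (?Z \<omega>) * indicator B2 (?W \<omega>) \<partial>M)"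
    by (intro nn_integral_cong) (auto simp: run_max_Suc[OF i] B1_def B2_def indicator_def max_def)
  also have "\<dots> = (\<integral>\<^sup>+\<omega>. indicator B1 (?Y \<omega>) \<partial>M) + (\<integral>\<^sup>+\<omega>. indicator {..x} (?Z \<omega>) * indicator B2 (?W \<omega>) \<partial>M)"
    by (intro nn_integral_add) auto
  also have "(\<integral>\<^sup>+\<omega>. indicator {..x} (?Z \<omega>) * indicator B2 (?W \<omega>) \<partial>M)
     = (\<integral>\<^sup>+z. \<integral>\<^sup>+w. indicator {..x} z * indicator B2 w \<partial>law \<partial>distr M borel ?Z)"
    using nn_integral_indep_var(1)[OF indep_ZW, of "\<lambda>p. indicator {..x} (fst p) * indicator B2 (snd p)"] law_W
    by simp
  also have "\<dots> = ennreal (cdf law x ^ i) * emeasure law B2"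
    using i by (simp add: nn_integral_cmult nn_integral_multc emeasure_distr_run_max_atMost)
  also have "\<dots> = (\<integral>\<^sup>+t. ennreal (max_density i t) * (indicator B2 t * ennreal (cdf law x ^ i / max_density i t)) \<partial>law)"
    unfolding nn_integral_cmult_indicator[symmetric, OF \<open>B2 \<in> sets borel\<close>[folded law.events_eq_borel]]
    by (intro nn_integral_cong)
      (auto simp: indicator_def B2_def mult.left_commute max_density_mult_cdf_quotient)
  also have "\<dots> = (\<integral>\<^sup>+t. indicator B2 t * ennreal (cdf law x ^ i / max_density i t) \<partial>distr M borel ?Y)"
    unfolding distr_run_max_Suc by (simp add: nn_integral_density)
  also have "\<dots> = (\<integral>\<^sup>+\<omega>. indicator B2 (?Y \<omega>) * ennreal (cdf law x ^ i / max_density i (?Y \<omega>)) \<partial>M)"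
    by (simp add: nn_integral_distr)
  also have "(\<integral>\<^sup>+\<omega>. indicator B1 (?Y \<omega>) \<partial>M) + \<dots>
     = (\<integral>\<^sup>+\<omega>. indicator B (?Y \<omega>) * ennreal (cond_cdf_prev i x (?Y \<omega>)) \<partial>M)"
    by (subst nn_integral_add[symmetric]) (auto intro!: nn_integral_cong simp: B1_def B2_def cond_cdf_prev_def indicator_def)
  finally show ?thesis .
qed

lemma cond_prob_run_max_le_given_Suc:
  assumes i: "1 \<le> i"
  shows "AE \<omega> in M. cond_prob M (sigma_gen M (Y (i+1))) {\<omega> \<in> space M. Y i \<omega> \<le> x} \<omega>
    = cond_cdf_prev i x (Y (i+1) \<omega>)"
proof (rule cond_prob_eqI[OF sigma_finite_subalgebra_sigma_gen])
  have [measurable]: "Y (i+1) \<in> borel_measurable (sigma_gen M (Y (i+1)))"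
    by (rule measurable_sigma_gen_self) simp
  show "(\<lambda>\<omega>. cond_cdf_prev i x (Y (i+1) \<omega>)) \<in> borel_measurable (sigma_gen M (Y (i+1)))"
    by measurable
  fix A assume "A \<in> sets (sigma_gen M (Y (i+1)))"
  then obtain B where B[measurable]: "B \<in> sets borel" and A: "A = Y (Suc i) -` B \<inter> space M"
    by (auto simp: sigma_gen_def sets_vimage_algebra2)
  have "(\<integral>\<^sup>+\<omega>. indicator A \<omega> * indicator {\<omega> \<in> space M. Y i \<omega> \<le> x} \<omega> \<partial>M)
     = (\<integral>\<^sup>+\<omega>. indicator B (Y (Suc i) \<omega>) * indicator {..x} (Y i \<omega>) \<partial>M)"
    by (intro nn_integral_cong) (auto simp: A indicator_def)
  also have "\<dots> = (\<integral>\<^sup>+\<omega>. indicator B (Y (Suc i) \<omega>) * ennreal (cond_cdf_prev i x (Y (Suc i) \<omega>)) \<partial>M)"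
    by (rule nn_integral_run_max_le_cond_cdf_prev[OF i B])
  also have "\<dots> = (\<integral>\<^sup>+\<omega>. indicator A \<omega> * ennreal (cond_cdf_prev i x (Y (i+1) \<omega>)) \<partial>M)"
    by (intro nn_integral_cong) (auto simp: A indicator_def)
  finally show "(\<integral>\<^sup>+\<omega>. indicator A \<omega> * indicator {\<omega> \<in> space M. Y i \<omega> \<le> x} \<omega> \<partial>M)
     = (\<integral>\<^sup>+\<omega>. indicator A \<omega> * ennreal (cond_cdf_prev i x (Y (i+1) \<omega>)) \<partial>M)" .
qed (auto simp: cond_cdf_prev_nonneg)

subsection \<open>Markov property\<close>

definition past :: "nat \<Rightarrow> 'a measure" where
  "past j = vimage_algebra (space M) (block {1..j}) (PiM {1..j} (\<lambda>_. borel))"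

lemma space_past[simp]: "space (past j) = space M"
  by (simp add: past_def)

lemma sets_past_subset: "sets (past j) \<subseteq> sets M"
  using measurable_block[of "{1..j}"]
  by (auto simp: past_def sets_vimage_algebra2 measurable_def)

lemma measurable_block_past[measurable]: "block {1..j} \<in> measurable (past j) (PiM {1..j} (\<lambda>_. borel))"
  unfolding past_def
  by (rule measurable_vimage_algebra1) (use measurable_space[OF measurable_block[of "{1..j}"]] in auto)

lemma measurable_run_max_past[measurable]: "k \<le> j \<Longrightarrow> Y k \<in> borel_measurable (past j)"
proof -
  assume k: "k \<le> j"
  have [measurable]: "max_on {1..k} \<in> borel_measurable (PiM {1..j} (\<lambda>_. borel))"
    by (rule measurable_max_on) (use k in auto)
  have "(\<lambda>\<omega>. max_on {1..k} (block {1..j} \<omega>)) \<in> borel_measurable (past j)" by measurable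
  moreover have "Y k = (\<lambda>\<omega>. max_on {1..k} (block {1..j} \<omega>))" using run_max_eq_max_on[OF k] by auto
  ultimately show ?thesis by simp
qed

lemma nn_integral_distr_block_singleton:
  assumes k: "1 \<le> k" and [measurable]: "g \<in> borel_measurable borel"
  shows "(\<integral>\<^sup>+w. g (w k) \<partial>distr M (PiM {k} (\<lambda>_. borel)) (block {k})) = (\<integral>\<^sup>+x. g x \<partial>law)"
proof -
  have [measurable]: "(\<lambda>w. w k) \<in> borel_measurable (PiM {k} (\<lambda>_. borel))"
    by (rule measurable_component_singleton) simp
  have "(\<integral>\<^sup>+w. g (w k) \<partial>distr M (PiM {k} (\<lambda>_. borel)) (block {k})) = (\<integral>\<^sup>+\<omega>. g (X k \<omega>) \<partial>M)"
    using k by (simp add: nn_integral_distr block_def)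
  also have "\<dots> = (\<integral>\<^sup>+x. g x \<partial>law)"
    using k by (simp add: nn_integral_distr distr_X_eq_law[symmetric])
  finally show ?thesis .
qed

definition step_kernel :: "real set \<Rightarrow> real \<Rightarrow> real" where
  "step_kernel B t = measure law ((\<lambda>x. max t x) -` B)"

lemma nn_integral_step_kernel:
  assumes [measurable]: "B \<in> sets borel"
  shows "(\<integral>\<^sup>+x. indicator B (max t x) \<partial>law) = ennreal (step_kernel B t)"
proof -
  have "(\<lambda>x. max t x) \<in> borel_measurable borel" by simp
  from measurable_sets_borel[OF this assms] have B_t: "(\<lambda>x. max t x) -` B \<in> sets law" by simp
  have "(\<integral>\<^sup>+x. indicator B (max t x) \<partial>law) = (\<integral>\<^sup>+x. indicator ((\<lambda>x. max t x) -` B) x \<partial>law)"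
    by (intro nn_integral_cong) (simp add: indicator_def)
  also have "\<dots> = emeasure law ((\<lambda>x. max t x) -` B)" by (rule nn_integral_indicator[OF B_t])
  finally show ?thesis by (simp add: step_kernel_def law.emeasure_eq_measure)
qed

lemma step_kernel_nonneg: "0 \<le> step_kernel B t"
  by (simp add: step_kernel_def)

lemma step_kernel_le_1: "step_kernel B t \<le> 1"
  by (simp add: step_kernel_def)

lemma measurable_step_kernel[measurable]:
  assumes [measurable]: "B \<in> sets borel"
  shows "step_kernel B \<in> borel_measurable borel"
proof -
  have "(\<lambda>t. \<integral>\<^sup>+x. indicator B (max t x) \<partial>law) \<in> borel_measurable borel"
    by (intro law.borel_measurable_nn_integral) (simp add: case_prod_beta')
  then have "(\<lambda>t. enn2real (\<integral>\<^sup>+x. indicator B (max t x) \<partial>law)) \<in> borel_measurable borel"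
    by measurable
  then show ?thesis by (simp add: nn_integral_step_kernel step_kernel_nonneg)
qed

lemma step_kernel_atMost: "step_kernel {..y} t = cdf law y * indicator {..y} t"
  by (cases "t \<le> y") (auto simp: step_kernel_def cdf_def vimage_def intro!: arg_cong[where f="measure law"])

text \<open>Since Y_(j+1) = max Y_j X_(j+1) with X_(j+1) independent of the past, integrating out
  X_(j+1) first leaves step_kernel evaluated at Y_j.\<close>
lemma nn_integral_past_run_max_Suc:
  assumes j: "1 \<le> j" and [measurable]: "B \<in> sets borel" and E: "E \<in> sets (past j)"
  shows "(\<integral>\<^sup>+\<omega>. indicator E \<omega> * indicator (Y (Suc j) -` B \<inter> space M) \<omega> \<partial>M)
    = (\<integral>\<^sup>+\<omega>. indicator E \<omega> * ennreal (step_kernel B (Y j \<omega>)) \<partial>M)"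
proof -
  let ?P = "PiM {1..j} (\<lambda>_. borel::real measure)"
  obtain D where [measurable]: "D \<in> sets ?P" and E_eq: "E = block {1..j} -` D \<inter> space M"
    using E measurable_space[OF measurable_block[of "{1..j}"]]
    by (auto simp: past_def sets_vimage_algebra2)
  have [measurable]: "max_on {1..j} \<in> borel_measurable ?P" by (rule measurable_max_on) auto
  let ?Q = "PiM {Suc j} (\<lambda>_. borel::real measure)"
  have [measurable]: "(\<lambda>w. w (Suc j)) \<in> borel_measurable ?Q"
    by (rule measurable_component_singleton) simp
  define f where "f = (\<lambda>p. indicator D (fst p) * indicator B (max (max_on {1..j} (fst p)) (snd p (Suc j))) :: ennreal)"
  have f[measurable]: "f \<in> borel_measurable (?P \<Otimes>\<^sub>M ?Q)" unfolding f_def by measurable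
  have "(\<integral>\<^sup>+\<omega>. indicator E \<omega> * indicator (Y (Suc j) -` B \<inter> space M) \<omega> \<partial>M)
      = (\<integral>\<^sup>+\<omega>. f (block {1..j} \<omega>, block {Suc j} \<omega>) \<partial>M)"
    by (intro nn_integral_cong)
      (simp add: E_eq f_def run_max_Suc[OF j] run_max_eq_max_on[of j j] indicator_def block_def)
  also have "\<dots> = (\<integral>\<^sup>+v. \<integral>\<^sup>+w. f (v, w) \<partial>distr M ?Q (block {Suc j}) \<partial>distr M ?P (block {1..j}))"
    by (rule nn_integral_indep_var(1)[OF indep_var_block f]) auto
  also have "\<dots> = (\<integral>\<^sup>+v. indicator D v * ennreal (step_kernel B (max_on {1..j} v)) \<partial>distr M ?P (block {1..j}))"
  proof (intro nn_integral_cong)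
    fix v
    have "(\<integral>\<^sup>+w. indicator B (max (max_on {1..j} v) (w (Suc j))) \<partial>distr M ?Q (block {Suc j}))
        = ennreal (step_kernel B (max_on {1..j} v))"
      using nn_integral_distr_block_singleton[of "Suc j" "\<lambda>x. indicator B (max (max_on {1..j} v) x)"]
      by (simp add: nn_integral_step_kernel)
    then show "(\<integral>\<^sup>+w. f (v, w) \<partial>distr M ?Q (block {Suc j})) = indicator D v * ennreal (step_kernel B (max_on {1..j} v))"
      by (simp add: f_def nn_integral_cmult)
  qed
  also have "\<dots> = (\<integral>\<^sup>+\<omega>. indicator D (block {1..j} \<omega>) * ennreal (step_kernel B (max_on {1..j} (block {1..j} \<omega>))) \<partial>M)"
    by (rule nn_integral_distr) measurable
  also have "\<dots> = (\<integral>\<^sup>+\<omega>. indicator E \<omega> * ennreal (step_kernel B (Y j \<omega>)) \<partial>M)"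
    by (intro nn_integral_cong) (simp add: E_eq run_max_eq_max_on[of j j] indicator_def)
  finally show ?thesis .
qed

lemma cond_prob_run_max_Suc:
  assumes "1 \<le> j" and [measurable]: "B \<in> sets borel"
    and G: "sigma_finite_subalgebra M G" "sets G \<subseteq> sets (past j)" "Y j \<in> borel_measurable G"
  shows "AE \<omega> in M. cond_prob M G (Y (Suc j) -` B \<inter> space M) \<omega> = step_kernel B (Y j \<omega>)"
proof (rule cond_prob_eqI[OF G(1)])
  show "(\<lambda>\<omega>. step_kernel B (Y j \<omega>)) \<in> borel_measurable G"
    using G(3) by measurable
qed (use assms nn_integral_past_run_max_Suc in \<open>auto simp: step_kernel_def\<close>)

lemma cond_prob_run_max_Suc_le:
  assumes "1 \<le> j" and "sigma_finite_subalgebra M G" "sets G \<subseteq> sets (past j)" "Y j \<in> borel_measurable G"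
  shows "AE \<omega> in M. cond_prob M G {\<omega> \<in> space M. Y (j+1) \<omega> \<le> y} \<omega> = cdf law y * indicator {\<omega>. y \<ge> Y j \<omega>} \<omega>"
proof -
  have "{\<omega> \<in> space M. Y (j+1) \<omega> \<le> y} = Y (Suc j) -` {..y} \<inter> space M" by auto
  then show ?thesis using cond_prob_run_max_Suc[OF assms(1) _ assms(2-), of "{..y}"]
    by (simp add: step_kernel_atMost indicator_def)
qed

lemma measurable_run_max_pair_past[measurable]:
  "k \<le> j \<Longrightarrow> (\<lambda>\<omega>. (Y k \<omega>, Y j \<omega>)) \<in> borel_measurable (past j)"
  using measurable_run_max_past[of k j] measurable_run_max_past[of j j] by measurable

lemma sigma_gen_run_max_pair:
  assumes "k \<le> j"
  shows "sigma_finite_subalgebra M (sigma_gen M (\<lambda>\<omega>. (Y k \<omega>, Y j \<omega>)))"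
    and "sets (sigma_gen M (\<lambda>\<omega>. (Y k \<omega>, Y j \<omega>))) \<subseteq> sets (past j)"
    and "Y j \<in> borel_measurable (sigma_gen M (\<lambda>\<omega>. (Y k \<omega>, Y j \<omega>)))"
proof -
  show "sigma_finite_subalgebra M (sigma_gen M (\<lambda>\<omega>. (Y k \<omega>, Y j \<omega>)))"
    by (rule sigma_finite_subalgebra_sigma_gen) measurable
  show "sets (sigma_gen M (\<lambda>\<omega>. (Y k \<omega>, Y j \<omega>))) \<subseteq> sets (past j)"
    by (rule sets_sigma_gen_subset[OF measurable_run_max_pair_past[OF assms] space_past])
  show "Y j \<in> borel_measurable (sigma_gen M (\<lambda>\<omega>. (Y k \<omega>, Y j \<omega>)))"
    by (rule measurable_sigma_gen_pair(2)) simp_all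
qed

lemma cond_prob_run_max_Suc_le_given_run_max:
  assumes "1 \<le> j"
  shows "AE \<omega> in M. cond_prob M (sigma_gen M (Y j)) {\<omega> \<in> space M. Y (j+1) \<omega> \<le> y} \<omega>
    = cdf law y * indicator {\<omega>. y \<ge> Y j \<omega>} \<omega>"
proof (rule cond_prob_run_max_Suc_le[OF assms sigma_finite_subalgebra_sigma_gen])
  show "sets (sigma_gen M (Y j)) \<subseteq> sets (past j)"
    by (rule sets_sigma_gen_subset[OF measurable_run_max_past]) simp_all
  show "Y j \<in> borel_measurable (sigma_gen M (Y j))"
    by (rule measurable_sigma_gen_self) simp
qed simp

lemma cond_prob_run_max_Suc_le_given_pair:
  assumes "1 \<le> j" "k \<le> j"
  shows "AE \<omega> in M. cond_prob M (sigma_gen M (\<lambda>\<omega>. (Y k \<omega>, Y j \<omega>))) {\<omega> \<in> space M. Y (j+1) \<omega> \<le> y} \<omega>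
    = cdf law y * indicator {\<omega>. y \<ge> Y j \<omega>} \<omega>"
  by (rule cond_prob_run_max_Suc_le[OF assms(1) sigma_gen_run_max_pair[OF assms(2)]])

text \<open>Y_j = max Y_(i+1) Z with Z the maximum of the block X_(i+2), ..., X_j, which is
  independent of X_1, ..., X_(i+1); integrating over that block first turns events of
  (Y_(i+1), Y_j) into events of Y_(i+1).\<close>
lemma nn_integral_run_max_pair_split:
  assumes i: "1 \<le> i" and ij: "Suc i < j" and D[measurable]: "D \<in> sets (borel :: (real \<times> real) measure)"
    and q[measurable]: "q \<in> borel_measurable (PiM {1..Suc i} (\<lambda>_. borel))"
  shows "(\<integral>\<^sup>+\<omega>. indicator D (Y (Suc i) \<omega>, Y j \<omega>) * q (block {1..Suc i} \<omega>) \<partial>M) =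
    (\<integral>\<^sup>+u. (\<integral>\<^sup>+\<omega>. indicator ((\<lambda>s. (s, max s (max_on {Suc i+1..j} u))) -` D) (Y (Suc i) \<omega>)
        * q (block {1..Suc i} \<omega>) \<partial>M) \<partial>distr M (PiM {Suc i+1..j} (\<lambda>_. borel)) (block {Suc i+1..j}))"
proof -
  let ?P = "PiM {1..Suc i} (\<lambda>_. borel::real measure)" and ?Q = "PiM {Suc i+1..j} (\<lambda>_. borel::real measure)"
  have [measurable]: "max_on {1..Suc i} \<in> borel_measurable ?P" "max_on {Suc i+1..j} \<in> borel_measurable ?Q"
    by (rule measurable_max_on; auto)+
  define f where "f = (\<lambda>p. indicator D (max_on {1..Suc i} (fst p),
    max (max_on {1..Suc i} (fst p)) (max_on {Suc i+1..j} (snd p))) * q (fst p) :: ennreal)"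
  have f[measurable]: "f \<in> borel_measurable (?P \<Otimes>\<^sub>M ?Q)" unfolding f_def by measurable
  have "(\<integral>\<^sup>+\<omega>. indicator D (Y (Suc i) \<omega>, Y j \<omega>) * q (block {1..Suc i} \<omega>) \<partial>M)
      = (\<integral>\<^sup>+\<omega>. f (block {1..Suc i} \<omega>, block {Suc i+1..j} \<omega>) \<partial>M)"
    using i ij by (intro nn_integral_cong)
      (simp add: f_def run_max_split[of "Suc i" j] run_max_eq_max_on[of "Suc i" "Suc i"])
  also have "\<dots> = (\<integral>\<^sup>+u. \<integral>\<^sup>+v. f (v, u) \<partial>distr M ?P (block {1..Suc i}) \<partial>distr M ?Q (block {Suc i+1..j}))"
    by (rule nn_integral_indep_var(2)[OF indep_var_block f]) auto
  also have "\<dots> = (\<integral>\<^sup>+u. (\<integral>\<^sup>+\<omega>. indicator ((\<lambda>s. (s, max s (max_on {Suc i+1..j} u))) -` D) (Y (Suc i) \<omega>)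
        * q (block {1..Suc i} \<omega>) \<partial>M) \<partial>distr M ?Q (block {Suc i+1..j}))"
  proof (intro nn_integral_cong)
    fix u
    let ?D = "(\<lambda>s. (s, max s (max_on {Suc i+1..j} u))) -` D"
    have "(\<lambda>s::real. (s, max s (max_on {Suc i+1..j} u))) \<in> borel_measurable borel" by measurable
    from measurable_sets_borel[OF this D] have [measurable]: "?D \<in> sets borel" .
    have "(\<integral>\<^sup>+v. f (v, u) \<partial>distr M ?P (block {1..Suc i}))
        = (\<integral>\<^sup>+v. indicator ?D (max_on {1..Suc i} v) * q v \<partial>distr M ?P (block {1..Suc i}))"
      by (intro nn_integral_cong) (simp add: f_def indicator_def)
    also have "\<dots> = (\<integral>\<^sup>+\<omega>. indicator ?D (max_on {1..Suc i} (block {1..Suc i} \<omega>)) * q (block {1..Suc i} \<omega>) \<partial>M)"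
      by (rule nn_integral_distr) measurable
    finally show "(\<integral>\<^sup>+v. f (v, u) \<partial>distr M ?P (block {1..Suc i}))
        = (\<integral>\<^sup>+\<omega>. indicator ?D (Y (Suc i) \<omega>) * q (block {1..Suc i} \<omega>) \<partial>M)"
      by (simp add: run_max_eq_max_on[of "Suc i" "Suc i"])
  qed
  finally show ?thesis .
qed

lemma nn_integral_run_max_pair_le_cond_cdf_prev:
  assumes i: "1 \<le> i" and ij: "Suc i < j" and D[measurable]: "D \<in> sets (borel :: (real \<times> real) measure)"
  shows "(\<integral>\<^sup>+\<omega>. indicator D (Y (Suc i) \<omega>, Y j \<omega>) * indicator {..x} (Y i \<omega>) \<partial>M)
    = (\<integral>\<^sup>+\<omega>. indicator D (Y (Suc i) \<omega>, Y j \<omega>) * ennreal (cond_cdf_prev i x (Y (Suc i) \<omega>)) \<partial>M)"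
proof -
  let ?P = "PiM {1..Suc i} (\<lambda>_. borel::real measure)"
  let ?D = "\<lambda>u. (\<lambda>s. (s, max s (max_on {Suc i+1..j} u))) -` D"
  have [measurable]: "max_on {1..i} \<in> borel_measurable ?P" "max_on {1..Suc i} \<in> borel_measurable ?P"
    by (rule measurable_max_on; auto)+
  define q1 where "q1 = (\<lambda>v. indicator {..x} (max_on {1..i} v) :: ennreal)"
  define q2 where "q2 = (\<lambda>v. ennreal (cond_cdf_prev i x (max_on {1..Suc i} v)))"
  have q[measurable]: "q1 \<in> borel_measurable ?P" "q2 \<in> borel_measurable ?P"
    unfolding q1_def q2_def by measurable
  have q1: "q1 (block {1..Suc i} \<omega>) = indicator {..x} (Y i \<omega>)" for \<omega>
    by (simp add: q1_def run_max_eq_max_on[of i "Suc i"])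
  have q2: "q2 (block {1..Suc i} \<omega>) = ennreal (cond_cdf_prev i x (Y (Suc i) \<omega>))" for \<omega>
    by (simp add: q2_def run_max_eq_max_on[of "Suc i" "Suc i"])
  have "?D u \<in> sets borel" for u
  proof -
    have "(\<lambda>s::real. (s, max s (max_on {Suc i+1..j} u))) \<in> borel_measurable borel" by measurable
    from measurable_sets_borel[OF this D] show ?thesis .
  qed
  then have "(\<integral>\<^sup>+\<omega>. indicator (?D u) (Y (Suc i) \<omega>) * q1 (block {1..Suc i} \<omega>) \<partial>M)
      = (\<integral>\<^sup>+\<omega>. indicator (?D u) (Y (Suc i) \<omega>) * q2 (block {1..Suc i} \<omega>) \<partial>M)" for u
    unfolding q1 q2 by (rule nn_integral_run_max_le_cond_cdf_prev[OF i])
  then show ?thesis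
    unfolding q1[symmetric] q2[symmetric] nn_integral_run_max_pair_split[OF i ij D q(1)]
      nn_integral_run_max_pair_split[OF i ij D q(2)]
    by simp
qed

lemma cond_prob_run_max_le_given_pair:
  assumes i: "1 \<le> i" and ij: "i + 1 < j"
  shows "AE \<omega> in M. cond_prob M (sigma_gen M (\<lambda>\<omega>. (Y (i+1) \<omega>, Y j \<omega>))) {\<omega> \<in> space M. Y i \<omega> \<le> x} \<omega>
    = cond_cdf_prev i x (Y (i+1) \<omega>)"
proof (rule cond_prob_eqI[OF sigma_gen_run_max_pair(1)])
  have [measurable]: "Y (i+1) \<in> borel_measurable (sigma_gen M (\<lambda>\<omega>. (Y (i+1) \<omega>, Y j \<omega>)))"
    by (rule measurable_sigma_gen_pair(1)) simp_all
  show "(\<lambda>\<omega>. cond_cdf_prev i x (Y (i+1) \<omega>)) \<in> borel_measurable (sigma_gen M (\<lambda>\<omega>. (Y (i+1) \<omega>, Y j \<omega>)))"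
    by measurable
  fix A assume "A \<in> sets (sigma_gen M (\<lambda>\<omega>. (Y (i+1) \<omega>, Y j \<omega>)))"
  then obtain D where D[measurable]: "D \<in> sets (borel :: (real \<times> real) measure)"
    and A: "A = (\<lambda>\<omega>. (Y (i+1) \<omega>, Y j \<omega>)) -` D \<inter> space M"
    by (auto simp: sigma_gen_def sets_vimage_algebra2)
  have "(\<integral>\<^sup>+\<omega>. indicator A \<omega> * indicator {\<omega> \<in> space M. Y i \<omega> \<le> x} \<omega> \<partial>M)
     = (\<integral>\<^sup>+\<omega>. indicator D (Y (Suc i) \<omega>, Y j \<omega>) * indicator {..x} (Y i \<omega>) \<partial>M)"
    by (intro nn_integral_cong) (auto simp: A indicator_def)
  also have "\<dots> = (\<integral>\<^sup>+\<omega>. indicator D (Y (Suc i) \<omega>, Y j \<omega>) * ennreal (cond_cdf_prev i x (Y (Suc i) \<omega>)) \<partial>M)"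
    using ij by (intro nn_integral_run_max_pair_le_cond_cdf_prev[OF i _ D]) simp
  also have "\<dots> = (\<integral>\<^sup>+\<omega>. indicator A \<omega> * ennreal (cond_cdf_prev i x (Y (i+1) \<omega>)) \<partial>M)"
    by (intro nn_integral_cong) (auto simp: A indicator_def)
  finally show "(\<integral>\<^sup>+\<omega>. indicator A \<omega> * indicator {\<omega> \<in> space M. Y i \<omega> \<le> x} \<omega> \<partial>M)
     = (\<integral>\<^sup>+\<omega>. indicator A \<omega> * ennreal (cond_cdf_prev i x (Y (i+1) \<omega>)) \<partial>M)" .
qed (use ij in \<open>auto simp: cond_cdf_prev_nonneg\<close>)

lemma cond_indep_run_max:
  assumes "1 \<le> i" "i < j"
  shows "cond_indep M (sigma_gen M (\<lambda>\<omega>. (Y (i+1) \<omega>, Y j \<omega>))) (Y i) (Y (j+1))"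
  unfolding cond_indep_def
proof (intro ballI)
  fix A B :: "real set" assume A[measurable]: "A \<in> sets borel" and B[measurable]: "B \<in> sets borel"
  let ?G = "sigma_gen M (\<lambda>\<omega>. (Y (i+1) \<omega>, Y j \<omega>))"
  have j: "1 \<le> j" "i + 1 \<le> j" using assms by auto
  note G = sigma_gen_run_max_pair[OF j(2)]
  have A_past: "Y i -` A \<inter> space M \<in> sets (past j)"
    using measurable_sets[OF measurable_run_max_past[of i j] A] assms by simp
  have "AE \<omega> in M. cond_prob M ?G ((Y i -` A \<inter> space M) \<inter> (Y (Suc j) -` B \<inter> space M)) \<omega>
      = cond_prob M ?G (Y i -` A \<inter> space M) \<omega> * step_kernel B (Y j \<omega>)"
  proof (rule cond_prob_Int_eq_mult[OF G(1,2) sets_past_subset A_past])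
    show "(\<lambda>\<omega>. step_kernel B (Y j \<omega>)) \<in> borel_measurable ?G" using G(3) by measurable
  qed (auto simp: step_kernel_nonneg step_kernel_le_1 nn_integral_past_run_max_Suc[OF j(1) B])
  moreover have "AE \<omega> in M. cond_prob M ?G (Y (Suc j) -` B \<inter> space M) \<omega> = step_kernel B (Y j \<omega>)"
    by (rule cond_prob_run_max_Suc[OF j(1) B G])
  ultimately show "AE \<omega> in M. cond_prob M ?G (Y i -` A \<inter> Y (j+1) -` B \<inter> space M) \<omega>
      = cond_prob M ?G (Y i -` A \<inter> space M) \<omega> * cond_prob M ?G (Y (j+1) -` B \<inter> space M) \<omega>"
    by eventually_elim (simp add: Int_assoc Int_left_commute)
qed

end

theorem lemma4p1:
  fixes M :: "'a measure" and X :: "nat \<Rightarrow> 'a \<Rightarrow> real" and F :: "real \<Rightarrow> real"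
    and i j :: nat
  assumes "prob_space M"
    and "prob_space.indep_vars M (\<lambda>_. borel) X {1..}"
    and "\<And>k. k \<ge> 1 \<Longrightarrow> distr M borel (X k) = distr M borel (X 1)"
    and "\<And>y. F y = measure M {\<omega> \<in> space M. X 1 \<omega> \<le> y}"
    and "1 \<le> i" and "i < j"
  defines "Y \<equiv> run_max X"
  shows
    "(\<forall>y. AE \<omega> in M. cond_prob M (sigma_gen M (Y j)) {\<omega> \<in> space M. Y (j+1) \<omega> \<le> y} \<omega>
                      = F y * indicator {\<omega>. y \<ge> Y j \<omega>} \<omega>)
   \<and> (i + 1 < j \<longrightarrow> (\<forall>y. AE \<omega> in M.
          cond_prob M (sigma_gen M (\<lambda>\<omega>. (Y (i+1) \<omega>, Y j \<omega>))) {\<omega> \<in> space M. Y (j+1) \<omega> \<le> y} \<omega>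
        = cond_prob M (sigma_gen M (Y j)) {\<omega> \<in> space M. Y (j+1) \<omega> \<le> y} \<omega>))
   \<and> (\<forall>x. AE \<omega> in M. cond_prob M (sigma_gen M (Y (i+1))) {\<omega> \<in> space M. Y i \<omega> \<le> x} \<omega>
          = indicator {\<omega>. x \<ge> Y (i+1) \<omega>} \<omega>
            + indicator {\<omega>. x < Y (i+1) \<omega>} \<omega> *
              (F x ^ i / (\<Sum>l=0..i. F (Y (i+1) \<omega>) ^ l * left_lim F (Y (i+1) \<omega>) ^ (i - l))))
   \<and> (i + 1 < j \<longrightarrow> (\<forall>x. AE \<omega> in M.
          cond_prob M (sigma_gen M (\<lambda>\<omega>. (Y (i+1) \<omega>, Y j \<omega>))) {\<omega> \<in> space M. Y i \<omega> \<le> x} \<omega>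
        = cond_prob M (sigma_gen M (Y (i+1))) {\<omega> \<in> space M. Y i \<omega> \<le> x} \<omega>))
   \<and> cond_indep M (sigma_gen M (\<lambda>\<omega>. (Y (i+1) \<omega>, Y j \<omega>))) (Y i) (Y (j+1))"
proof -
  interpret iid_running_max M X
    unfolding iid_running_max_def iid_running_max_axioms_def using assms(1-3) by blast
  have i: "1 \<le> i" and j: "1 \<le> j" using assms(5,6) by auto
  have F: "F = cdf law"
  proof
    fix y show "F y = cdf law y" using measure_X_le[of 1 y] assms(4)[of y] by simp
  qed
  have cond_cdf_prev: "cond_cdf_prev i x s = indicator {..x} s + indicator {x<..} s *
      (cdf law x ^ i / (\<Sum>l=0..i. cdf law s ^ l * left_lim (cdf law) s ^ (i - l)))" for x s
    by (simp add: law.left_lim_cdf cond_cdf_prev_def max_density_def indicator_def)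
  show ?thesis
    unfolding Y_def F
    apply (intro conjI allI impI)
    subgoal for y by (rule cond_prob_run_max_Suc_le_given_run_max[OF j])
    subgoal premises ij for y
      using cond_prob_run_max_Suc_le_given_pair[OF j less_imp_le[OF ij], of y]
        cond_prob_run_max_Suc_le_given_run_max[OF j, of y]
      by eventually_elim simp
    subgoal for x
      using cond_prob_run_max_le_given_Suc[OF i, of x] by (simp add: cond_cdf_prev indicator_def)
    subgoal premises ij for x
      using cond_prob_run_max_le_given_pair[OF i ij, of x] cond_prob_run_max_le_given_Suc[OF i, of x]
      by eventually_elim simp
    subgoal by (rule cond_indep_run_max[OF i assms(6)])
    done
qed

end
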